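(* Let $q=2^t$. Let $p$ be a point of $\ell_0$ and let $\ell,\ell'$ be two distinct lines of $L$, both different from $\ell_0$, each passing through $p$. Then $\chi_\ell+\chi_{\ell'}\in C(P,L_1)$.
   Context: Let $q$ be a prime power and $V$ a $4$-dimensional vector space over $\mathbb{F}_q$ with a nonsingular alternating bilinear form $(\cdot,\cdot)$ and symplectic basis $e_0,e_1,e_2,e_3$ with $(e_0,e_3)=(e_1,e_2)=1$. $P$ is the set of $1$-dimensional subspaces of $V$ (points), $L$ the set of totally isotropic $2$-dimensional subspaces (lines), with incidence by containment. $\ell_0=\langle e_0,e_1\rangle$, and $L_1$ is the set of lines sharing no point with $\ell_0$. $\mathbb{F}_2[P]$ is the $\mathbb{F}_2$-vector space of functions $P\to\mathbb{F}_2$; for a line $\ell$, $\chi_\ell\in\mathbb{F}_2[P]$ is its characteristic function (value $1$ exactly at the $q+1$ points of $\ell$). For a set $S$ of lines, $C(P,S)$ is the $\mathbb{F}_2$-span of $\{\chi_\ell:\ell\in S\}$ in $\mathbb{F}_2[P]$. *)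

theory Defs
  imports "HOL-Analysis.Analysis" "HOL-Library.Z2"
begin

text \<open>V = F_q^4 modelled as 'a^4 over a finite field 'a; the symplectic form with
  (e0,e3) = (e1,e2) = 1, where e_i is the i-th standard basis vector.\<close>

definition sympf :: "'a::field ^ 4 \<Rightarrow> 'a ^ 4 \<Rightarrow> 'a" where
  "sympf x y = x$0 * y$3 - x$3 * y$0 + x$1 * y$2 - x$2 * y$1"

definition ebasis :: "4 \<Rightarrow> 'a::field ^ 4" where
  "ebasis i = axis i 1"

definition pt :: "'a::field ^ 4 \<Rightarrow> ('a ^ 4) set" where
  "pt v = range (\<lambda>c. c *s v)"

definition span2 :: "'a::field ^ 4 \<Rightarrow> 'a ^ 4 \<Rightarrow> ('a ^ 4) set" where
  "span2 u w = {a *s u + b *s w | a b. True}"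

definition points :: "('a::field ^ 4) set set" where
  "points = {pt v | v. v \<noteq> 0}"

definition lines :: "('a::field ^ 4) set set" where
  "lines = {span2 u w | u w.
      (\<forall>a b. a *s u + b *s w = 0 \<longrightarrow> a = 0 \<and> b = 0) \<and>
      (\<forall>x\<in>span2 u w. \<forall>y\<in>span2 u w. sympf x y = 0)}"

definition ell0 :: "('a::field ^ 4) set" where
  "ell0 = span2 (ebasis 0) (ebasis 1)"

definition L1 :: "('a::field ^ 4) set set" where
  "L1 = {l \<in> lines. \<not> (\<exists>p\<in>points. p \<subseteq> l \<and> p \<subseteq> ell0)}"

text \<open>Characteristic function of a line, as an element of F_2[P] (zero off P).\<close>
definition chi :: "('a::field ^ 4) set \<Rightarrow> ('a ^ 4) set \<Rightarrow> bit" where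
  "chi l p = (if p \<in> points \<and> p \<subseteq> l then 1 else 0)"

text \<open>C(P,S): F_2-span of the characteristic functions of lines in S.\<close>
definition Cspan :: "('a::field ^ 4) set set \<Rightarrow> (('a ^ 4) set \<Rightarrow> bit) set" where
  "Cspan S = {f. \<exists>T\<subseteq>S. finite T \<and> f = (\<lambda>p. \<Sum>l\<in>T. chi l p)}"

end

theory Submission imports Defs begin

(*
  Write p = <v> with v in ell0, and pick c in l, b in l' with
  l = <v,c>, l' = <v,b>.  Since l and l' are distinct lines through v, the
  form does not vanish on (b,c): k = (b,c) <> 0; completing (v,b,c) by a
  vector d orthogonal to b and c with (v,d) = k yields a hyperbolic frame
  (a,b,c,d) = (v,b,c,d), i.e. (a,d) = (b,c) = k and all other pairings vanish.
  In such a frame, with a in ell0 and b, c outside ell0, consider the 2q lines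
      A_t = <t a + b, t c + d>,   B_t = <t a + c, t b + d>     (t in F_q).
  In characteristic 2 they are all totally isotropic, none meets ell0, and
  every point lies on an even number of them unless it lies on exactly one of
  <a,c>, <a,b>; hence  chi<a,c> + chi<a,b> = sum_t chi A_t + sum_t chi B_t.
*)

lemma vec4_eq_iff:
  "(x::'a^4) = y \<longleftrightarrow> x$0 = y$0 \<and> x$1 = y$1 \<and> x$2 = y$2 \<and> x$3 = y$3"
proof
  assume h: "x$0 = y$0 \<and> x$1 = y$1 \<and> x$2 = y$2 \<and> x$3 = y$3"
  show "x = y" unfolding vec_eq_iff
  proof
    fix i :: 4
    have "i = 0 \<or> i = 1 \<or> i = 2 \<or> i = 3" using exhaust_4[of i] by auto
    with h show "x$i = y$i" by auto
  qed
qed simp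

lemma sympf_add_left: "sympf (x + y) z = sympf x z + sympf y z"
  and sympf_add_right: "sympf z (x + y) = sympf z x + sympf z y"
  and sympf_diff_left: "sympf (x - y) z = sympf x z - sympf y z"
  and sympf_diff_right: "sympf z (x - y) = sympf z x - sympf z y"
  and sympf_smult_left: "sympf (s *s x) z = s * sympf x z"
  and sympf_smult_right: "sympf z (s *s x) = s * sympf z x"
  and sympf_self: "sympf x x = 0"
  by (simp_all add: sympf_def algebra_simps)

lemmas sympf_simps = sympf_add_left sympf_add_right sympf_diff_left sympf_diff_right
  sympf_smult_left sympf_smult_right sympf_self

lemma sympf_swap: "sympf y x = - sympf x y"
  by (simp add: sympf_def algebra_simps)

lemma sympf_nondegenerate:
  fixes v :: "'a::field^4"
  assumes "v \<noteq> 0"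
  shows "\<exists>m. sympf v m \<noteq> 0"
proof -
  have "sympf v (axis 3 1) = v$0" "sympf v (axis 2 1) = v$1"
    "sympf v (axis 1 1) = - v$2" "sympf v (axis 0 1) = - v$3"
    by (simp_all add: sympf_def axis_def)
  moreover have "v$0 \<noteq> 0 \<or> v$1 \<noteq> 0 \<or> v$2 \<noteq> 0 \<or> v$3 \<noteq> 0"
    using assms by (auto simp: vec4_eq_iff)
  ultimately show ?thesis by (metis neg_equal_0_iff_equal)
qed

text \<open>A field of order 2^t has characteristic 2: translation by 1 permutes the
  field, so the sum of its elements is unchanged, whence q * 1 = 0.\<close>

lemma char_two_of_card:
  assumes "CARD('a::{field,finite}) = 2 ^ t"
  shows "(1::'a) + 1 = 0"
proof -
  have "(\<Sum>x\<in>UNIV. x + 1) = (\<Sum>x\<in>UNIV. (x::'a))"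
    by (rule sum.reindex_bij_witness[of _ "\<lambda>x. x - 1" "\<lambda>x. x + 1"]) auto
  hence "of_nat CARD('a) = (0::'a)" by (simp add: sum.distrib)
  hence "(2::'a) ^ t = 0" using assms by simp
  thus ?thesis by simp
qed

lemma solutions_of_linear_equation:
  fixes \<alpha> \<beta> x y :: "'a::field"
  assumes "\<alpha> * y + \<beta> * x = 0" "\<alpha> \<noteq> 0 \<or> \<beta> \<noteq> 0"
  shows "\<exists>\<kappa>. x = \<kappa> * \<alpha> \<and> y = - (\<kappa> * \<beta>)"
proof (cases "\<alpha> = 0")
  case False
  thus ?thesis using assms(1) by (intro exI[of _ "x / \<alpha>"]) (simp add: field_simps add_eq_0_iff)
next
  case True
  thus ?thesis using assms by (intro exI[of _ "- y / \<beta>"]) auto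
qed

definition indep :: "'a::field^4 \<Rightarrow> 'a^4 \<Rightarrow> bool" where
  "indep u w \<longleftrightarrow> (\<forall>s r. s *s u + r *s w = 0 \<longrightarrow> s = 0 \<and> r = 0)"

lemma span2_closed:
  assumes "x \<in> span2 u w" "y \<in> span2 u w"
  shows "s *s x + r *s y \<in> span2 u w"
proof -
  obtain a1 b1 where x: "x = a1 *s u + b1 *s w" using assms(1) by (auto simp: span2_def)
  obtain a2 b2 where y: "y = a2 *s u + b2 *s w" using assms(2) by (auto simp: span2_def)
  have "s *s x + r *s y = (s * a1 + r * a2) *s u + (s * b1 + r * b2) *s w"
    unfolding x y by (simp add: vec_eq_iff algebra_simps)
  thus ?thesis unfolding span2_def by blast
qed

lemma span2_generators: "u \<in> span2 u w" "w \<in> span2 u w"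
proof -
  have "u = 1 *s u + 0 *s w" "w = 0 *s u + 1 *s w" by simp_all
  thus "u \<in> span2 u w" "w \<in> span2 u w" unfolding span2_def by blast+
qed

lemma span2_subset:
  assumes "x \<in> span2 u w" "y \<in> span2 u w"
  shows "span2 x y \<subseteq> span2 u w"
  using span2_closed[OF assms] unfolding span2_def[of x y] by blast

lemma vector_in_pt: "v \<in> pt v"
  unfolding pt_def by (metis rangeI vector_smult_lid)

lemma pt_subset_span2_iff: "pt v \<subseteq> span2 u w \<longleftrightarrow> v \<in> span2 u w"
proof
  assume "pt v \<subseteq> span2 u w"
  thus "v \<in> span2 u w" using vector_in_pt by blast
qed (auto simp: pt_def intro: span2_closed[where r = 0, simplified])

text \<open>Over a finite field, a span of two independent vectors has q^2 elements;
  hence an inclusion between two such spans is an equality.\<close>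

lemma card_span2:
  fixes u w :: "'a::{field,finite}^4"
  assumes "indep u w"
  shows "card (span2 u w) = CARD('a) * CARD('a)"
proof -
  let ?f = "\<lambda>(s::'a, r::'a). s *s u + r *s w"
  have image: "span2 u w = ?f ` UNIV" unfolding span2_def by auto
  have "inj ?f"
  proof (rule injI)
    fix x y :: "'a \<times> 'a" assume h: "?f x = ?f y"
    obtain s1 r1 s2 r2 where x: "x = (s1, r1)" and y: "y = (s2, r2)" by (cases x, cases y)
    have "(s1 - s2) *s u + (r1 - r2) *s w = 0"
      using h unfolding x y by (simp add: vec_eq_iff algebra_simps)
    thus "x = y" using assms unfolding indep_def x y by fastforce
  qed
  hence "card (?f ` UNIV) = card (UNIV :: ('a \<times> 'a) set)" by (rule card_image)
  thus ?thesis unfolding image UNIV_Times_UNIV[symmetric] card_cartesian_product .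
qed

lemma span2_eq_of_subset:
  fixes u w :: "'a::{field,finite}^4"
  assumes "indep u w" "indep u' w'" "span2 u w \<subseteq> span2 u' w'"
  shows "span2 u w = span2 u' w'"
  using card_span2[OF assms(1)] card_span2[OF assms(2)] assms(3)
  by (intro card_subset_eq) simp_all

lemma span2_exchange:
  fixes u w v :: "'a::{field,finite}^4"
  assumes iu: "indep u w" and v_in: "v \<in> span2 u w" and v0: "v \<noteq> 0"
  shows "\<exists>c. span2 u w = span2 v c \<and> indep v c \<and> c \<in> span2 u w"
proof -
  obtain x y where v: "v = x *s u + y *s w" using v_in unfolding span2_def by blast
  have exchange: "\<exists>c. span2 u w = span2 v c \<and> indep v c \<and> c \<in> span2 u w"
    if c_in: "c \<in> span2 u w" and ind: "indep v c" for c
    using span2_eq_of_subset[OF ind iu span2_subset[OF v_in c_in]] ind c_in by blast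
  show ?thesis
  proof (cases "y = 0")
    case False
    have "indep v u" unfolding indep_def
    proof (intro allI impI)
      fix s r assume "s *s v + r *s u = 0"
      hence "(s*x + r) *s u + (s*y) *s w = 0" unfolding v by (simp add: vec_eq_iff algebra_simps)
      hence "s*x + r = 0 \<and> s*y = 0" using iu unfolding indep_def by blast
      thus "s = 0 \<and> r = 0" using False by auto
    qed
    thus ?thesis using exchange span2_generators(1) by blast
  next
    case True
    hence x: "x \<noteq> 0" using v0 v by auto
    have "indep v w" unfolding indep_def
    proof (intro allI impI)
      fix s r assume "s *s v + r *s w = 0"
      hence "(s*x) *s u + r *s w = 0" unfolding v using True by (simp add: vec_eq_iff algebra_simps)
      hence "s*x = 0 \<and> r = 0" using iu unfolding indep_def by blast
      thus "s = 0 \<and> r = 0" using x by simp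
    qed
    thus ?thesis using exchange span2_generators(2) by blast
  qed
qed

lemma isotropic_span2:
  assumes "sympf u w = 0"
  shows "\<forall>x\<in>span2 u w. \<forall>y\<in>span2 u w. sympf x y = (0::'a::field)"
proof (intro ballI)
  fix x y assume "x \<in> span2 u w" "y \<in> span2 u w"
  then obtain s1 r1 s2 r2 where "x = s1 *s u + r1 *s w" "y = s2 *s u + r2 *s w"
    by (auto simp: span2_def)
  moreover have "sympf w u = 0" using sympf_swap[of w u] assms by simp
  ultimately show "sympf x y = 0" using assms by (simp add: sympf_simps)
qed

lemma lineI:
  assumes "indep u w" "sympf u w = 0"
  shows "span2 u w \<in> lines"
  using assms isotropic_span2 unfolding lines_def indep_def by blast

lemma line_through_vector:
  fixes v :: "'a::{field,finite}^4"
  assumes "l \<in> lines" "v \<noteq> 0" "v \<in> l"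
  shows "\<exists>c. l = span2 v c \<and> indep v c \<and> sympf v c = 0"
proof -
  obtain u w where l: "l = span2 u w" and iu: "indep u w"
    and iso: "\<forall>x\<in>span2 u w. \<forall>y\<in>span2 u w. sympf x y = 0"
    using assms(1) unfolding lines_def indep_def by blast
  obtain c where "l = span2 v c" "indep v c" "c \<in> l"
    using span2_exchange[OF iu] assms(2,3) l by blast
  thus ?thesis using iso assms(3) l by blast
qed

lemma ell0_iff: "x \<in> (ell0::('a::field^4) set) \<longleftrightarrow> x$2 = 0 \<and> x$3 = 0"
proof
  assume "x \<in> ell0" thus "x$2 = 0 \<and> x$3 = 0"
    by (auto simp: ell0_def span2_def ebasis_def axis_def)
next
  assume h: "x$2 = 0 \<and> x$3 = 0"
  have "x = (x$0) *s ebasis 0 + (x$1) *s ebasis 1"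
    using h by (simp add: vec4_eq_iff ebasis_def axis_def)
  thus "x \<in> ell0" by (auto simp: ell0_def span2_def)
qed

lemma ell0_isotropic: "x \<in> ell0 \<Longrightarrow> y \<in> ell0 \<Longrightarrow> sympf x y = (0::'a::field)"
  by (simp add: ell0_iff sympf_def)

lemma ell0_closed: "x \<in> ell0 \<Longrightarrow> y \<in> ell0 \<Longrightarrow> s *s x + r *s y \<in> ell0"
  unfolding ell0_def by (rule span2_closed)

lemma generator_outside_ell0:
  fixes v c :: "'a::{field,finite}^4"
  assumes "indep v c" "v \<in> ell0" "span2 v c \<noteq> ell0"
  shows "c \<notin> ell0"
proof
  assume "c \<in> ell0"
  hence "span2 v c \<subseteq> ell0" using assms(2) span2_subset unfolding ell0_def by blast
  moreover have "indep (ebasis 0) (ebasis 1 :: 'a^4)"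
    unfolding indep_def by (simp add: vec4_eq_iff ebasis_def axis_def)
  ultimately show False using span2_eq_of_subset assms(1,3) unfolding ell0_def by blast
qed

text \<open>Criterion for a line to miss ell0: if the vectors of the line orthogonal to
  a fixed a in ell0 are all multiples of a vector e outside ell0.  (Every vector
  of ell0 is orthogonal to a, since ell0 is totally isotropic.)\<close>

lemma line_in_L1:
  assumes line: "l \<in> lines" and a: "a \<in> ell0" and e: "e \<notin> ell0"
    and perp: "\<And>x. x \<in> l \<Longrightarrow> sympf x a = 0 \<Longrightarrow> \<exists>s. x = s *s e"
  shows "l \<in> L1"
proof -
  have "\<not> (pt v \<subseteq> l \<and> pt v \<subseteq> ell0)" if "v \<noteq> 0" for v
  proof
    assume "pt v \<subseteq> l \<and> pt v \<subseteq> ell0"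
    hence vl: "v \<in> l" and vE: "v \<in> ell0" using vector_in_pt by blast+
    obtain s where s: "v = s *s e" using perp[OF vl ell0_isotropic[OF vE a]] by blast
    hence "s \<noteq> 0" using \<open>v \<noteq> 0\<close> by auto
    hence "e = inverse s *s v + 0 *s v" using s by (simp add: vec_eq_iff)
    thus False using e ell0_closed[OF vE vE] by metis
  qed
  thus ?thesis using line unfolding L1_def points_def by blast
qed

section \<open>Completing a point and two lines to a hyperbolic frame\<close>

text \<open>Two distinct lines <v,b>, <v,c> through a point <v> of ell0, with b outside
  ell0, cannot span a totally isotropic plane together: otherwise c would lie in
  <v,b>.  (The coordinates of b and c outside ell0 are proportional, so a
  combination x of b and c lies in ell0; orthogonality forces x to be a
  multiple of v.)\<close>

lemma orthogonal_in_span2: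
  fixes v b c :: "'a::field^4"
  assumes vE: "v \<in> ell0" and v0: "v \<noteq> 0" and bE: "b \<notin> ell0"
    and vb: "sympf v b = 0" and vc: "sympf v c = 0" and bc: "sympf b c = 0"
  shows "c \<in> span2 v b"
proof -
  define \<alpha> \<beta> where "\<alpha> = v$0" and "\<beta> = v$1"
  have v23: "v$2 = 0" "v$3 = 0" using vE ell0_iff by blast+
  have \<alpha>\<beta>: "\<alpha> \<noteq> 0 \<or> \<beta> \<noteq> 0" using v0 v23 by (auto simp: \<alpha>_def \<beta>_def vec4_eq_iff)
  have perp_v: "\<exists>\<kappa>. x$2 = \<kappa> * \<alpha> \<and> x$3 = - (\<kappa> * \<beta>)" if "sympf v x = 0" for x
    using solutions_of_linear_equation[OF _ \<alpha>\<beta>] that v23 by (simp add: sympf_def \<alpha>_def \<beta>_def)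
  obtain \<kappa>b where \<kappa>b: "b$2 = \<kappa>b * \<alpha>" "b$3 = - (\<kappa>b * \<beta>)" using perp_v[OF vb] by blast
  obtain \<kappa>c where \<kappa>c: "c$2 = \<kappa>c * \<alpha>" "c$3 = - (\<kappa>c * \<beta>)" using perp_v[OF vc] by blast
  have \<kappa>b0: "\<kappa>b \<noteq> 0" using bE \<kappa>b by (auto simp: ell0_iff)
  define x where "x = \<kappa>c *s b - \<kappa>b *s c"
  have x23: "x$2 = 0" "x$3 = 0" using \<kappa>b \<kappa>c by (simp_all add: x_def algebra_simps)
  have "\<kappa>b * (\<alpha> * x$1 + \<beta> * - x$0) = sympf x b"
    using x23 \<kappa>b by (simp add: sympf_def algebra_simps)
  also have "\<dots> = 0" using bc sympf_swap[of b c] by (simp add: x_def sympf_simps)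
  finally have "\<alpha> * x$1 + \<beta> * - x$0 = 0" using \<kappa>b0 by simp
  from solutions_of_linear_equation[OF this \<alpha>\<beta>]
  obtain \<mu> where "- x$0 = \<mu> * \<alpha>" "x$1 = - (\<mu> * \<beta>)" by blast
  hence "x = (- \<mu>) *s v" using x23 v23 by (simp add: vec4_eq_iff \<alpha>_def \<beta>_def) (metis minus_minus)
  hence "c = (\<mu> / \<kappa>b) *s v + (\<kappa>c / \<kappa>b) *s b"
    using \<kappa>b0 unfolding x_def by (simp add: vec_eq_iff field_simps)
  thus ?thesis using span2_closed[OF span2_generators] by metis
qed

text \<open>Given v orthogonal to b and c with (b,c) = k nonzero, there is d orthogonal
  to b and c with (v,d) = k: correct a vector m with (v,m) <> 0 by multiples of
  b and c, then rescale.\<close>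

lemma hyperbolic_completion:
  fixes v b c :: "'a::field^4"
  assumes "v \<noteq> 0" "sympf v b = 0" "sympf v c = 0" "sympf b c \<noteq> 0"
  shows "\<exists>d. sympf b d = 0 \<and> sympf c d = 0 \<and> sympf v d = sympf b c"
proof -
  define k where "k = sympf b c"
  obtain m where m: "sympf v m \<noteq> 0" using sympf_nondegenerate[OF assms(1)] by blast
  define d where "d = (k / sympf v m) *s (m - (sympf m c / k) *s b + (sympf m b / k) *s c)"
  have "sympf c b = - k" unfolding k_def by (rule sympf_swap)
  hence "sympf d b = 0" "sympf d c = 0" "sympf v d = k"
    using assms(2-4) m by (simp_all add: d_def k_def sympf_simps)
  thus ?thesis using sympf_swap[of d b] sympf_swap[of d c] by (auto simp: k_def)
qed

section \<open>The parity computation in a hyperbolic frame\<close>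

lemma parity_of_proportionality_factors:
  fixes u w z r :: "'a::{field,finite}"
  assumes "\<not> (u = 0 \<and> w = 0 \<and> z = 0 \<and> r = 0)"
  shows "(\<Sum>t\<in>UNIV. if u = t*w \<and> z = t*r then (1::bit) else 0)
     = (if (w \<noteq> 0 \<or> r \<noteq> 0) \<and> u*r = w*z then 1 else 0)"
proof -
  consider (w) "w \<noteq> 0" | (r) "w = 0" "r \<noteq> 0" | (zero) "w = 0" "r = 0" by blast
  thus ?thesis
  proof cases
    case w
    have "(u = t*w \<and> z = t*r) \<longleftrightarrow> (t = u/w \<and> u*r = w*z)" for t
      using w by (auto simp: field_simps)
    thus ?thesis using w by (simp add: sum.delta cong: if_cong)
  next
    case r
    have "(u = t*w \<and> z = t*r) \<longleftrightarrow> (t = z/r \<and> u = 0)" for t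
      using r by (auto simp: field_simps)
    thus ?thesis using r by (simp add: sum.delta cong: if_cong)
  next
    case zero
    thus ?thesis using assms by auto
  qed
qed

lemma bit_add_self: "(x::bit) + x = 0"
  by (cases x) simp_all

locale hyperbolic_frame =
  fixes a b c d :: "'a::{field,finite}^4" and k :: 'a
  assumes char_two: "(1::'a) + 1 = 0"
    and ab: "sympf a b = 0" and ac: "sympf a c = 0" and bd: "sympf b d = 0" and cd: "sympf c d = 0"
    and ad: "sympf a d = k" and bc: "sympf b c = k" and k0: "k \<noteq> 0"
    and a_ell0: "a \<in> ell0" and b_ell0: "b \<notin> ell0" and c_ell0: "c \<notin> ell0"
begin

definition comb :: "'a \<Rightarrow> 'a \<Rightarrow> 'a \<Rightarrow> 'a \<Rightarrow> 'a^4" where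
  "comb x0 x1 x2 x3 = x0 *s a + x1 *s b + x2 *s c + x3 *s d"

lemma sympf_comb:
  "sympf (comb x0 x1 x2 x3) d = x0 * k"
  "sympf (comb x0 x1 x2 x3) c = x1 * k"
  "sympf (comb x0 x1 x2 x3) b = - (x2 * k)"
  "sympf (comb x0 x1 x2 x3) a = - (x3 * k)"
proof -
  have "sympf b a = 0" "sympf c a = 0" "sympf d b = 0" "sympf d c = 0"
    "sympf d a = - k" "sympf c b = - k"
    using sympf_swap[of a b] sympf_swap[of a c] sympf_swap[of b d] sympf_swap[of c d]
      sympf_swap[of a d] sympf_swap[of b c] ab ac bd cd ad bc by simp_all
  thus "sympf (comb x0 x1 x2 x3) d = x0 * k" "sympf (comb x0 x1 x2 x3) c = x1 * k"
    "sympf (comb x0 x1 x2 x3) b = - (x2 * k)" "sympf (comb x0 x1 x2 x3) a = - (x3 * k)"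
    by (simp_all add: comb_def sympf_simps ab ac bd cd ad bc)
qed

text \<open>Coordinates are unique (read them off by pairing with the frame) and exist
  (an injective map of a finite set to itself is onto).\<close>

lemma comb_eq_iff:
  "comb x0 x1 x2 x3 = comb y0 y1 y2 y3 \<longleftrightarrow> x0 = y0 \<and> x1 = y1 \<and> x2 = y2 \<and> x3 = y3"
proof
  assume e: "comb x0 x1 x2 x3 = comb y0 y1 y2 y3"
  have "x0 * k = y0 * k" "x1 * k = y1 * k" "- (x2 * k) = - (y2 * k)" "- (x3 * k) = - (y3 * k)"
    using sympf_comb[of x0 x1 x2 x3] sympf_comb[of y0 y1 y2 y3] e by metis+
  thus "x0 = y0 \<and> x1 = y1 \<and> x2 = y2 \<and> x3 = y3" using k0 by simp
qed simp

lemma comb_exists: "\<exists>x0 x1 x2 x3. v = comb x0 x1 x2 x3"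
proof -
  define F where "F = (\<lambda>y::'a^4. comb (y$0) (y$1) (y$2) (y$3))"
  have "inj F" by (rule injI) (simp add: F_def comb_eq_iff, simp add: vec4_eq_iff)
  hence "surj F" using finite_UNIV_inj_surj[of F] by simp
  then obtain y where "v = F y" by (metis surjD)
  thus ?thesis unfolding F_def by blast
qed

lemma comb_zero_iff: "comb x0 x1 x2 x3 = 0 \<longleftrightarrow> x0 = 0 \<and> x1 = 0 \<and> x2 = 0 \<and> x3 = 0"
  using comb_eq_iff[of x0 x1 x2 x3 0 0 0 0] by (simp add: comb_def)

lemma comb_in_span2_iff:
  "comb x0 x1 x2 x3 \<in> span2 (comb u0 u1 u2 u3) (comb w0 w1 w2 w3) \<longleftrightarrow>
   (\<exists>s r. x0 = s*u0 + r*w0 \<and> x1 = s*u1 + r*w1 \<and> x2 = s*u2 + r*w2 \<and> x3 = s*u3 + r*w3)"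
proof -
  have "s *s comb u0 u1 u2 u3 + r *s comb w0 w1 w2 w3
      = comb (s*u0 + r*w0) (s*u1 + r*w1) (s*u2 + r*w2) (s*u3 + r*w3)" for s r
    by (simp add: comb_def vec_eq_iff algebra_simps)
  thus ?thesis unfolding span2_def by (auto simp: comb_eq_iff)
qed

definition lineA :: "'a \<Rightarrow> ('a^4) set" where
  "lineA t = span2 (t *s a + b) (t *s c + d)"

definition lineB :: "'a \<Rightarrow> ('a^4) set" where
  "lineB t = span2 (t *s a + c) (t *s b + d)"

lemma frame_spans:
  "lineA t = span2 (comb t 1 0 0) (comb 0 0 t 1)"
  "lineB t = span2 (comb t 0 1 0) (comb 0 t 0 1)"
  "span2 a c = span2 (comb 1 0 0 0) (comb 0 0 1 0)"
  "span2 a b = span2 (comb 1 0 0 0) (comb 0 1 0 0)"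
  by (simp_all add: lineA_def lineB_def comb_def)

lemma comb_in_lineA: "comb x0 x1 x2 x3 \<in> lineA t \<longleftrightarrow> x0 = t * x1 \<and> x2 = t * x3"
  unfolding frame_spans comb_in_span2_iff by (auto simp: mult.commute)

lemma comb_in_lineB: "comb x0 x1 x2 x3 \<in> lineB t \<longleftrightarrow> x0 = t * x2 \<and> x1 = t * x3"
  unfolding frame_spans comb_in_span2_iff by (auto simp: mult.commute)

lemma comb_in_ac: "comb x0 x1 x2 x3 \<in> span2 a c \<longleftrightarrow> x1 = 0 \<and> x3 = 0"
  unfolding frame_spans comb_in_span2_iff by auto

lemma comb_in_ab: "comb x0 x1 x2 x3 \<in> span2 a b \<longleftrightarrow> x2 = 0 \<and> x3 = 0"
  unfolding frame_spans comb_in_span2_iff by auto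

lemma shifted_outside_ell0: "f \<notin> ell0 \<Longrightarrow> t *s a + f \<notin> ell0"
  using ell0_closed[of "t *s a + f" a 1 "- t"] a_ell0 by (auto simp: vec_eq_iff)

lemma orthogonal_to_a: "sympf (comb x0 x1 x2 x3) a = 0 \<longleftrightarrow> x3 = 0"
  using sympf_comb(4) k0 by simp

text \<open>All lines of both pencils lie in L1: they are totally isotropic in
  characteristic 2, and their vectors orthogonal to a are multiples of
  t a + b (resp. t a + c), which lies outside ell0.\<close>

lemma lineA_in_L1: "lineA t \<in> L1"
proof -
  let ?e = "t *s a + b" and ?g = "t *s c + d"
  have "s *s ?e + r *s ?g = comb (s * t) s (r * t) r" for s r
    by (simp add: comb_def vec_eq_iff algebra_simps)
  hence "indep ?e ?g" unfolding indep_def by (simp add: comb_zero_iff)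
  moreover have "sympf ?e ?g = (1 + 1) * t * k"
    by (simp add: sympf_simps ac ad bc bd algebra_simps)
  hence "sympf ?e ?g = 0" using char_two by simp
  ultimately have "lineA t \<in> lines" unfolding lineA_def by (rule lineI)
  moreover have "\<exists>s. x = s *s ?e" if "x \<in> lineA t" "sympf x a = 0" for x
  proof -
    obtain x0 x1 x2 x3 where x: "x = comb x0 x1 x2 x3" using comb_exists by blast
    hence "x0 = t * x1" "x2 = 0" "x3 = 0"
      using that comb_in_lineA orthogonal_to_a by auto
    hence "x = x1 *s ?e" unfolding x by (simp add: comb_def vec_eq_iff algebra_simps)
    thus ?thesis by blast
  qed
  ultimately show ?thesis by (rule line_in_L1[OF _ a_ell0 shifted_outside_ell0[OF b_ell0]])
qed

lemma lineB_in_L1: "lineB t \<in> L1"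
proof -
  let ?e = "t *s a + c" and ?g = "t *s b + d"
  have "s *s ?e + r *s ?g = comb (s * t) (r * t) s r" for s r
    by (simp add: comb_def vec_eq_iff algebra_simps)
  hence "indep ?e ?g" unfolding indep_def by (simp add: comb_zero_iff)
  moreover have "sympf ?e ?g = 0"
    using sympf_swap[of c b] by (simp add: sympf_simps ab ad bc cd)
  ultimately have "lineB t \<in> lines" unfolding lineB_def by (rule lineI)
  moreover have "\<exists>s. x = s *s ?e" if "x \<in> lineB t" "sympf x a = 0" for x
  proof -
    obtain x0 x1 x2 x3 where x: "x = comb x0 x1 x2 x3" using comb_exists by blast
    hence "x0 = t * x2" "x1 = 0" "x3 = 0"
      using that comb_in_lineB orthogonal_to_a by auto
    hence "x = x2 *s ?e" unfolding x by (simp add: comb_def vec_eq_iff algebra_simps)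
    thus ?thesis by blast
  qed
  ultimately show ?thesis by (rule line_in_L1[OF _ a_ell0 shifted_outside_ell0[OF c_ell0]])
qed

text \<open>If y3 <> 0 both
  pencils contribute the same parity and cancel; if y3 = 0 what remains is the
  incidence with <a,c> and with <a,b>.\<close>

lemma pencil_parity:
  "(\<Sum>t\<in>UNIV. chi (lineA t) x) + (\<Sum>t\<in>UNIV. chi (lineB t) x)
   = chi (span2 a c) x + chi (span2 a b) x"
proof (cases "x \<in> points")
  case False
  thus ?thesis by (simp add: chi_def)
next
  case True
  then obtain v where "v \<noteq> 0" and x: "x = pt v" by (auto simp: points_def)
  moreover obtain y0 y1 y2 y3 where v: "v = comb y0 y1 y2 y3" using comb_exists by blast
  ultimately have nonzero: "\<not> (y0 = 0 \<and> y1 = 0 \<and> y2 = 0 \<and> y3 = 0)"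
    by (simp add: comb_zero_iff)
  have chi_pt: "chi l x = (if v \<in> l then 1 else 0)" if "l = span2 u w" for l u w
    using True that by (simp add: chi_def x pt_subset_span2_iff)
  have chi_A: "chi (lineA t) x = (if y0 = t * y1 \<and> y2 = t * y3 then 1 else 0)"
    and chi_B: "chi (lineB t) x = (if y0 = t * y2 \<and> y1 = t * y3 then 1 else 0)" for t
    by (simp_all add: chi_pt[OF lineA_def] chi_pt[OF lineB_def] v comb_in_lineA comb_in_lineB)
  have nonzero': "\<not> (y0 = 0 \<and> y2 = 0 \<and> y1 = 0 \<and> y3 = 0)" using nonzero by blast
  have "(\<Sum>t\<in>UNIV. chi (lineA t) x) = (if (y1 \<noteq> 0 \<or> y3 \<noteq> 0) \<and> y0 * y3 = y1 * y2 then 1 else 0)"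
    unfolding chi_A by (rule parity_of_proportionality_factors[OF nonzero])
  moreover have
    "(\<Sum>t\<in>UNIV. chi (lineB t) x) = (if (y2 \<noteq> 0 \<or> y3 \<noteq> 0) \<and> y0 * y3 = y2 * y1 then 1 else 0)"
    unfolding chi_B by (rule parity_of_proportionality_factors[OF nonzero'])
  moreover have "chi (span2 a c) x = (if y1 = 0 \<and> y3 = 0 then 1 else 0)"
    "chi (span2 a b) x = (if y2 = 0 \<and> y3 = 0 then 1 else 0)"
    by (simp_all add: chi_pt v comb_in_ac comb_in_ab)
  ultimately show ?thesis
    by (cases "y3 = 0"; cases "y1 = 0"; cases "y2 = 0"; simp add: bit_add_self mult.commute)
qed

theorem chi_sum_in_Cspan_L1: "(\<lambda>x. chi (span2 a c) x + chi (span2 a b) x) \<in> Cspan L1"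
proof -
  have inA: "comb s 1 0 0 \<in> lineA t \<longleftrightarrow> s = t" for s t by (auto simp: comb_in_lineA)
  have notB: "comb s 1 0 0 \<notin> lineB t" for s t by (simp add: comb_in_lineB)
  have inB: "comb s 0 1 0 \<in> lineB t \<longleftrightarrow> s = t" for s t by (auto simp: comb_in_lineB)
  have inj: "inj lineA" "inj lineB" by (metis inA injI, metis inB injI)
  have "lineA s \<noteq> lineB t" for s t using inA[of s s] notB[of s t] by auto
  hence disjoint: "range lineA \<inter> range lineB = {}" by blast
  define T where "T = range lineA \<union> range lineB"
  have "(\<Sum>l\<in>T. chi l x) = chi (span2 a c) x + chi (span2 a b) x" for x
  proof -
    have "(\<Sum>l\<in>T. chi l x) = (\<Sum>l\<in>range lineA. chi l x) + (\<Sum>l\<in>range lineB. chi l x)"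
      unfolding T_def by (intro sum.union_disjoint) (simp_all add: disjoint)
    also have "\<dots> = (\<Sum>t\<in>UNIV. chi (lineA t) x) + (\<Sum>t\<in>UNIV. chi (lineB t) x)"
      by (simp only: sum.reindex[OF inj(1)] sum.reindex[OF inj(2)] o_def)
    also have "\<dots> = chi (span2 a c) x + chi (span2 a b) x" by (rule pencil_parity)
    finally show ?thesis .
  qed
  hence "(\<lambda>x. chi (span2 a c) x + chi (span2 a b) x) = (\<lambda>x. \<Sum>l\<in>T. chi l x)" by simp
  moreover have "T \<subseteq> L1" "finite T" using lineA_in_L1 lineB_in_L1 by (auto simp: T_def)
  ultimately show ?thesis unfolding Cspan_def by blast
qed

end

theorem lemma5:
  fixes t :: nat
    and p l l' :: "('a::{field,finite} ^ 4) set"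
  assumes "CARD('a) = 2 ^ t"
    and "p \<in> points" and "p \<subseteq> ell0"
    and "l \<in> lines" and "l' \<in> lines" and "l \<noteq> l'"
    and "l \<noteq> ell0" and "l' \<noteq> ell0"
    and "p \<subseteq> l" and "p \<subseteq> l'"
  shows "(\<lambda>x. chi l x + chi l' x) \<in> Cspan L1"
proof -
  obtain v where v0: "v \<noteq> 0" and p: "p = pt v" using assms(2) unfolding points_def by blast
  have vE: "v \<in> ell0" using assms(3) p vector_in_pt by blast
  obtain c where l: "l = span2 v c" "indep v c" "sympf v c = 0"
    using line_through_vector[OF assms(4) v0] assms(9) p vector_in_pt by blast
  obtain b where l': "l' = span2 v b" "indep v b" "sympf v b = 0"
    using line_through_vector[OF assms(5) v0] assms(10) p vector_in_pt by blast
  have cE: "c \<notin> ell0" using generator_outside_ell0[OF l(2) vE] l(1) assms(7) by blast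
  have bE: "b \<notin> ell0" using generator_outside_ell0[OF l'(2) vE] l'(1) assms(8) by blast
  have bc: "sympf b c \<noteq> 0"
  proof
    assume "sympf b c = 0"
    hence "c \<in> span2 v b" by (rule orthogonal_in_span2[OF vE v0 bE l'(3) l(3)])
    hence "span2 v c = span2 v b"
      by (rule span2_eq_of_subset[OF l(2) l'(2) span2_subset[OF span2_generators(1)]])
    thus False using assms(6) l(1) l'(1) by simp
  qed
  obtain d where "sympf b d = 0" "sympf c d = 0" "sympf v d = sympf b c"
    using hyperbolic_completion[OF v0 l'(3) l(3) bc] by blast
  hence "hyperbolic_frame v b c d (sympf b c)"
    unfolding hyperbolic_frame_def using char_two_of_card[OF assms(1)] l l' vE bE cE bc by blast
  from hyperbolic_frame.chi_sum_in_Cspan_L1[OF this]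
  show ?thesis unfolding l(1) l'(1) .
qed

end
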